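(* Let $V$ be an Archimedean linear lattice and let $(\mathcal{R}, S, V)$ be a $V$-complete vector $S$-metric space. Let $p, k:\mathcal{R}\to\mathcal{R}$ be maps satisfying: (i) for all $\xi,\gamma\in\mathcal{R}$, $$S(p\xi,p\xi,p\gamma)\preceq h_1 S(k\xi,k\xi,k\gamma)+h_2 S(p\xi,p\xi,k\xi)+h_3 S(p\gamma,p\gamma,k\gamma)+h_4 S(p\xi,p\xi,k\gamma)+h_5 S(p\gamma,p\gamma,k\xi),$$ where $h_1,\dots,h_5$ are positive real constants with $2h_1+2h_2+2h_3+4h_4+4h_5<1$; (ii) $p(\mathcal{R})\subset k(\mathcal{R})$; (iii) one of $p(\mathcal{R})$ or $k(\mathcal{R})$ is a $V$-complete subspace of $\mathcal{R}$. Then $\{p,k\}$ has a unique point of coincidence in $\mathcal{R}$. If moreover $\{p,k\}$ is weakly compatible, then $p$ and $k$ have a unique common fixed point in $\mathcal{R}$.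
   Context: An ordered linear space is a real vector space $V$ with a partial order $\preceq$ such that $x\preceq y$ implies $x+z\preceq y+z$ and $\omega x\preceq \omega y$ for all $z\in V$, $\omega>0$. A linear lattice (Riesz space) is an ordered linear space in which every two-element set has a supremum and an infimum. Write $V^+=\{x\in V: x\succeq 0\}$; for a sequence $\langle\mu_n\rangle$ in $V$, $\mu_n\downarrow 0$ means $\mu_n$ is decreasing with infimum $0$. $V$ is Archimedean if $\frac1n x\downarrow 0$ for every $x\in V^+$. A vector $S$-metric on a nonempty set $\mathcal{R}$ is a map $S:\mathcal{R}\times\mathcal{R}\times\mathcal{R}\to V$ such that for all $x,y,z,a\in\mathcal{R}$: (a) $S(x,y,z)\succeq 0$; (b) $S(x,y,z)=0$ iff $x=y=z$; (c) $S(x,y,z)\preceq S(x,x,a)+S(y,y,a)+S(z,z,a)$. Then $(\mathcal{R},S,V)$ is a vector $S$-metric space. A sequence $\langle x_n\rangle$ in $\mathcal{R}$ $V$-converges to $x\in\mathcal{R}$ if there is a sequence $\mu_n\downarrow 0$ in $V$ with $S(x_n,x_n,x)\preceq \mu_n$ for all $n$; it is $V$-Cauchy if there is $\mu_n\downarrow0$ in $V$ with $S(x_n,x_n,x_{n+q})\preceq\mu_n$ for all $n,q$. The space (or a subset) is $V$-complete if every $V$-Cauchy sequence in it $V$-converges to a limit in it. For maps $f,g:\mathcal{R}\to\mathcal{R}$, a point $x$ with $fx=gx=y$ is a coincidence point and $y$ is a point of coincidence of $f$ and $g$; $f,g$ are weakly compatible if $fgx=gfx$ whenever $fx=gx$.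 A common fixed point of $f$ and $g$ is a point $x$ with $fx=gx=x$. *)

theory Defs
  imports Complex_Main
begin

text \<open>A linear lattice (Riesz space) is modelled as a type of class
  ordered_real_vector (ordered linear space) that is also a lattice
  (inf/sup w.r.t. the same order).\<close>

definition dec_to_zero :: "(nat \<Rightarrow> 'v::{ordered_real_vector,lattice}) \<Rightarrow> bool" where
  "dec_to_zero \<mu> \<longleftrightarrow> (\<forall>n. \<mu> (Suc n) \<le> \<mu> n) \<and> (\<forall>n. 0 \<le> \<mu> n)
     \<and> (\<forall>b. (\<forall>n. b \<le> \<mu> n) \<longrightarrow> b \<le> 0)"

definition archimedean_V :: "'v::{ordered_real_vector,lattice} itself \<Rightarrow> bool" where
  "archimedean_V _ \<longleftrightarrow> (\<forall>x::'v. 0 \<le> x \<longrightarrow> dec_to_zero (\<lambda>n. (1 / real (Suc n)) *\<^sub>R x))"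

definition vector_S_metric :: "('a \<Rightarrow> 'a \<Rightarrow> 'a \<Rightarrow> 'v::{ordered_real_vector,lattice}) \<Rightarrow> bool" where
  "vector_S_metric S \<longleftrightarrow>
     (\<forall>x y z. 0 \<le> S x y z) \<and>
     (\<forall>x y z. S x y z = 0 \<longleftrightarrow> (x = y \<and> y = z)) \<and>
     (\<forall>x y z a. S x y z \<le> S x x a + S y y a + S z z a)"

definition V_converges :: "('a \<Rightarrow> 'a \<Rightarrow> 'a \<Rightarrow> 'v::{ordered_real_vector,lattice}) \<Rightarrow> (nat \<Rightarrow> 'a) \<Rightarrow> 'a \<Rightarrow> bool" where
  "V_converges S x l \<longleftrightarrow> (\<exists>\<mu>. dec_to_zero \<mu> \<and> (\<forall>n. S (x n) (x n) l \<le> \<mu> n))"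

definition V_Cauchy :: "('a \<Rightarrow> 'a \<Rightarrow> 'a \<Rightarrow> 'v::{ordered_real_vector,lattice}) \<Rightarrow> (nat \<Rightarrow> 'a) \<Rightarrow> bool" where
  "V_Cauchy S x \<longleftrightarrow> (\<exists>\<mu>. dec_to_zero \<mu> \<and> (\<forall>n q. S (x n) (x n) (x (n + q)) \<le> \<mu> n))"

definition V_complete_on :: "('a \<Rightarrow> 'a \<Rightarrow> 'a \<Rightarrow> 'v::{ordered_real_vector,lattice}) \<Rightarrow> 'a set \<Rightarrow> bool" where
  "V_complete_on S A \<longleftrightarrow>
     (\<forall>x. (\<forall>n. x n \<in> A) \<longrightarrow> V_Cauchy S x \<longrightarrow> (\<exists>l\<in>A. V_converges S x l))"

definition point_of_coincidence :: "('a \<Rightarrow> 'a) \<Rightarrow> ('a \<Rightarrow> 'a) \<Rightarrow> 'a \<Rightarrow> bool" where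
  "point_of_coincidence f g y \<longleftrightarrow> (\<exists>x. f x = y \<and> g x = y)"

definition weakly_compatible :: "('a \<Rightarrow> 'a) \<Rightarrow> ('a \<Rightarrow> 'a) \<Rightarrow> bool" where
  "weakly_compatible f g \<longleftrightarrow> (\<forall>x. f x = g x \<longrightarrow> f (g x) = g (f x))"

end

theory Submission
  imports Defs
begin

(* Jungck iteration: choose x with k x(n+1) = p x(n) and put y n = p x(n). The contractive
   condition at (x(n+1), x(n)), with the S-metric triangle inequality for the h4-term, makes
   consecutive distances of y shrink by r = (h1 + h3 + h4) / (1 - h2 - 2 h4) < 1, so the
   distances S(y n, y n, y (n+q)) are bounded by r^n times a fixed vector and y is V-Cauchy
   (this is where the Archimedean property enters). Its limit lies in k(R), say k u, and the
   contractive condition at (u, x(n+1)) bounds S(p u, p u, k u) by a multiple of the sequence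
   witnessing convergence, so p u = k u. Applied at two coincidence points the contractive
   condition forces their points of coincidence to agree, and weak compatibility turns the
   unique point of coincidence into the unique common fixed point. *)

lemma le_scaleR_absorb:
  fixes A W :: "'v::ordered_real_vector"
  assumes "A \<le> a *\<^sub>R A + W" and "a < 1"
  shows "A \<le> (1 / (1 - a)) *\<^sub>R W"
proof -
  have "(1 - a) *\<^sub>R A \<le> W"
    using assms(1) by (simp add: algebra_simps)
  then have "(1 / (1 - a)) *\<^sub>R ((1 - a) *\<^sub>R A) \<le> (1 / (1 - a)) *\<^sub>R W"
    using assms(2) by (intro scaleR_left_mono) auto
  then show ?thesis
    using assms(2) by simp
qed

lemma dec_to_zero_scaleR:
  fixes v :: "'v::{ordered_real_vector,lattice}"
  assumes arch: "archimedean_V TYPE('v)" and v: "0 \<le> v"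
    and dec: "decseq a" and lim: "a \<longlonglongrightarrow> 0"
  shows "dec_to_zero (\<lambda>n. a n *\<^sub>R v)"
  unfolding dec_to_zero_def
proof (intro conjI allI impI)
  fix n
  show "a (Suc n) *\<^sub>R v \<le> a n *\<^sub>R v"
    using dec v by (intro scaleR_right_mono) (simp add: decseq_Suc_iff)
  show "0 \<le> a n *\<^sub>R v"
    using decseq_ge[OF dec lim] v by (rule scaleR_nonneg_nonneg)
next
  fix b
  assume b: "\<forall>n. b \<le> a n *\<^sub>R v"
  have "b \<le> (1 / real (Suc m)) *\<^sub>R v" for m
  proof -
    have "\<forall>\<^sub>F n in sequentially. a n < 1 / real (Suc m)"
      using lim by (rule order_tendstoD) simp
    then obtain n where "a n < 1 / real (Suc m)"
      by (auto simp: eventually_sequentially)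
    then have "a n *\<^sub>R v \<le> (1 / real (Suc m)) *\<^sub>R v"
      using v by (intro scaleR_right_mono) auto
    then show ?thesis
      using b order_trans by blast
  qed
  moreover have "dec_to_zero (\<lambda>n. (1 / real (Suc n)) *\<^sub>R v)"
    using arch v unfolding archimedean_V_def by blast
  ultimately show "b \<le> 0"
    unfolding dec_to_zero_def by blast
qed

lemma le_zero_if_le_scaleR_dec_to_zero:
  fixes v :: "'v::{ordered_real_vector,lattice}"
  assumes "dec_to_zero \<mu>" and "0 < c" and "\<And>n. v \<le> c *\<^sub>R \<mu> n"
  shows "v \<le> 0"
proof -
  have "(1 / c) *\<^sub>R v \<le> \<mu> n" for n
  proof -
    have "(1 / c) *\<^sub>R v \<le> (1 / c) *\<^sub>R (c *\<^sub>R \<mu> n)"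
      using assms(2,3) by (intro scaleR_left_mono) auto
    then show ?thesis
      using assms(2) by simp
  qed
  then have "(1 / c) *\<^sub>R v \<le> 0"
    using assms(1) unfolding dec_to_zero_def by blast
  then have "c *\<^sub>R ((1 / c) *\<^sub>R v) \<le> c *\<^sub>R 0"
    using assms(2) by (intro scaleR_left_mono) auto
  then show ?thesis
    using assms(2) by simp
qed

context
  fixes S :: "'a \<Rightarrow> 'a \<Rightarrow> 'a \<Rightarrow> 'v::{ordered_real_vector,lattice}"
  assumes S: "vector_S_metric S"
begin

lemma S_nonneg: "0 \<le> S x y z"
  using S unfolding vector_S_metric_def by blast

lemma S_eq_0_iff: "S x x z = 0 \<longleftrightarrow> x = z"
  using S unfolding vector_S_metric_def by blast

lemma S_self [simp]: "S x x x = 0"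
  by (simp add: S_eq_0_iff)

lemma S_commute: "S x x y = S y y x"
proof -
  have le: "S u u w \<le> S w w u" for u w
    using S unfolding vector_S_metric_def by (metis S_self add_0)
  show ?thesis
    using le[of x y] le[of y x] by (rule antisym)
qed

lemma S_triangle: "S x x z \<le> 2 *\<^sub>R S x x y + S y y z"
proof -
  have "S x x z \<le> S x x y + S x x y + S z z y"
    using S unfolding vector_S_metric_def by blast
  then show ?thesis
    by (simp add: S_commute[of z y] scaleR_2)
qed

lemma S_chain_le:
  "S (y n) (y n) (y (n + q)) \<le> 2 *\<^sub>R (\<Sum>i<q. S (y (n + i)) (y (n + i)) (y (Suc (n + i))))"
proof (induction q arbitrary: n)
  case 0
  then show ?case by simp
next
  case (Suc q)
  have "S (y n) (y n) (y (n + Suc q)) \<le> 2 *\<^sub>R S (y n) (y n) (y (Suc n)) + S (y (Suc n)) (y (Suc n)) (y (Suc n + q))"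
    using S_triangle by simp
  also have "\<dots> \<le> 2 *\<^sub>R S (y n) (y n) (y (Suc n))
      + 2 *\<^sub>R (\<Sum>i<q. S (y (Suc n + i)) (y (Suc n + i)) (y (Suc (Suc n + i))))"
    using Suc.IH by (rule add_left_mono)
  also have "\<dots> = 2 *\<^sub>R (\<Sum>i<Suc q. S (y (n + i)) (y (n + i)) (y (Suc (n + i))))"
    by (simp add: sum.lessThan_Suc_shift scaleR_add_right del: sum.lessThan_Suc)
  finally show ?case .
qed

lemma V_Cauchy_if_contracting:
  assumes arch: "archimedean_V TYPE('v)" and r: "0 \<le> r" "r < 1"
    and step: "\<And>n. S (y (Suc n)) (y (Suc n)) (y (Suc (Suc n))) \<le> r *\<^sub>R S (y n) (y n) (y (Suc n))"
  shows "V_Cauchy S y"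
proof -
  define d where "d n = S (y n) (y n) (y (Suc n))" for n
  have d_power: "d n \<le> r ^ n *\<^sub>R d 0" for n
  proof (induction n)
    case 0
    then show ?case by simp
  next
    case (Suc n)
    have "d (Suc n) \<le> r *\<^sub>R d n"
      using step unfolding d_def .
    also have "\<dots> \<le> r *\<^sub>R (r ^ n *\<^sub>R d 0)"
      using Suc.IH r(1) by (rule scaleR_left_mono)
    finally show ?case by simp
  qed
  have geometric: "(\<Sum>i<q. r ^ (n + i)) \<le> r ^ n / (1 - r)" for n q
  proof -
    have "(\<Sum>i<q. r ^ (n + i)) = r ^ n * ((1 - r ^ q) / (1 - r))"
      using r by (simp add: power_add sum_distrib_left[symmetric] sum_gp_strict)
    also have "\<dots> \<le> r ^ n / (1 - r)"
      using r by (simp add: divide_right_mono mult_left_le)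
    finally show ?thesis .
  qed
  define w where "w = (2 / (1 - r)) *\<^sub>R d 0"
  have "S (y n) (y n) (y (n + q)) \<le> r ^ n *\<^sub>R w" for n q
  proof -
    have "S (y n) (y n) (y (n + q)) \<le> 2 *\<^sub>R (\<Sum>i<q. d (n + i))"
      using S_chain_le unfolding d_def .
    also have "\<dots> \<le> 2 *\<^sub>R (\<Sum>i<q. r ^ (n + i) *\<^sub>R d 0)"
      by (intro scaleR_left_mono sum_mono d_power) auto
    also have "\<dots> = (2 * (\<Sum>i<q. r ^ (n + i))) *\<^sub>R d 0"
      by (simp add: scaleR_sum_left[symmetric])
    also have "\<dots> \<le> (2 * (r ^ n / (1 - r))) *\<^sub>R d 0"
      using geometric[of n q] by (intro scaleR_right_mono) (simp_all add: d_def S_nonneg)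
    finally show ?thesis
      by (simp add: w_def mult.commute)
  qed
  moreover have "dec_to_zero (\<lambda>n. r ^ n *\<^sub>R w)"
  proof (rule dec_to_zero_scaleR[OF arch])
    show "0 \<le> w"
      using r S_nonneg unfolding w_def d_def by (intro scaleR_nonneg_nonneg) auto
    show "decseq (\<lambda>n. r ^ n)"
      using r by (intro decseq_SucI) (simp add: mult_left_le_one_le)
    show "(\<lambda>n. r ^ n) \<longlonglongrightarrow> 0"
      using r by (intro LIMSEQ_power_zero) simp
  qed
  ultimately show ?thesis
    unfolding V_Cauchy_def by blast
qed

end

lemma Jungck_sequence_exists:
  assumes "range p \<subseteq> range k"
  obtains x where "\<And>n. k (x (Suc n)) = p (x n)"
proof -
  have "\<exists>w. k w = p z" for z
  proof -
    have "p z \<in> range k"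
      using assms by blast
    then show ?thesis
      by (auto simp: image_iff eq_commute)
  qed
  then obtain g where g: "\<And>z. k (g z) = p z"
    by metis
  show ?thesis
    by (rule that[of "\<lambda>n. (g ^^ n) undefined"]) (simp add: g)
qed

lemma weakly_compatible_unique_common_fixed_point:
  assumes "weakly_compatible f g" and "\<exists>!y. point_of_coincidence f g y"
  shows "\<exists>!x. f x = x \<and> g x = x"
proof -
  from assms(2) obtain w where w: "point_of_coincidence f g w"
    and unique: "\<forall>y. point_of_coincidence f g y \<longrightarrow> y = w"
    by (rule ex1E)
  from w obtain u where u: "f u = w" "g u = w"
    unfolding point_of_coincidence_def by blast
  have "f (g u) = g (f u)"
    using assms(1) u unfolding weakly_compatible_def by (metis (no_types))
  then have "f w = g w"
    using u by simp
  then have "point_of_coincidence f g (f w)"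
    unfolding point_of_coincidence_def by (intro exI[of _ w]) simp
  then have "f w = w"
    using unique by blast
  show ?thesis
  proof (rule ex1I)
    show "f w = w \<and> g w = w"
      using \<open>f w = w\<close> \<open>f w = g w\<close> by simp
    show "z = w" if "f z = z \<and> g z = z" for z
      using that unique unfolding point_of_coincidence_def by blast
  qed
qed

locale jungck_contraction =
  fixes S :: "'a \<Rightarrow> 'a \<Rightarrow> 'a \<Rightarrow> 'v::{ordered_real_vector,lattice}"
    and p k :: "'a \<Rightarrow> 'a"
    and h1 h2 h3 h4 h5 :: real
  assumes S_metric: "vector_S_metric S"
    and h_nonneg: "0 \<le> h1" "0 \<le> h2" "0 \<le> h3" "0 \<le> h4" "0 \<le> h5"
    and h_sum: "2*h1 + 2*h2 + 2*h3 + 4*h4 + 4*h5 < 1"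
    and contraction: "\<And>\<xi> \<gamma>. S (p \<xi>) (p \<xi>) (p \<gamma>) \<le>
        h1 *\<^sub>R S (k \<xi>) (k \<xi>) (k \<gamma>) + h2 *\<^sub>R S (p \<xi>) (p \<xi>) (k \<xi>)
      + h3 *\<^sub>R S (p \<gamma>) (p \<gamma>) (k \<gamma>) + h4 *\<^sub>R S (p \<xi>) (p \<xi>) (k \<gamma>)
      + h5 *\<^sub>R S (p \<gamma>) (p \<gamma>) (k \<xi>)"
begin

lemmas S_nonneg = S_nonneg[OF S_metric]
  and S_eq_0_iff = S_eq_0_iff[OF S_metric]
  and S_self [simp] = S_self[OF S_metric]
  and S_commute = S_commute[OF S_metric]
  and S_triangle = S_triangle[OF S_metric]

lemma point_of_coincidence_unique:
  assumes "point_of_coincidence p k y" and "point_of_coincidence p k z"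
  shows "y = z"
proof -
  obtain a b where a: "p a = y" "k a = y" and b: "p b = z" "k b = z"
    using assms unfolding point_of_coincidence_def by blast
  let ?D = "S y y z"
  have "?D \<le> h1 *\<^sub>R ?D + h2 *\<^sub>R 0 + h3 *\<^sub>R 0 + h4 *\<^sub>R ?D + h5 *\<^sub>R ?D"
    using contraction[of a b] by (simp add: a b S_commute[of z y])
  then have "?D \<le> (h1 + h4 + h5) *\<^sub>R ?D + 0"
    by (simp add: algebra_simps)
  then have "?D \<le> (1 / (1 - (h1 + h4 + h5))) *\<^sub>R 0"
    using h_sum h_nonneg by (intro le_scaleR_absorb) auto
  then have "?D = 0"
    using S_nonneg[of y y z] by simp
  then show ?thesis
    using S_eq_0_iff by simp
qed

definition ratio :: real where
  "ratio = (h1 + h3 + h4) / (1 - (h2 + 2*h4))"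

lemma ratio_nonneg: "0 \<le> ratio" and ratio_less_1: "ratio < 1"
  using h_nonneg h_sum by (auto simp: ratio_def field_simps)

lemma Jungck_step:
  assumes x: "\<And>n. k (x (Suc n)) = p (x n)"
  shows "S (p (x (Suc n))) (p (x (Suc n))) (p (x (Suc (Suc n))))
    \<le> ratio *\<^sub>R S (p (x n)) (p (x n)) (p (x (Suc n)))"
proof -
  define y where "y n = p (x n)" for n
  define e where "e n = S (y (Suc n)) (y (Suc n)) (y n)" for n
  have "e (Suc n) \<le> h1 *\<^sub>R e n + h2 *\<^sub>R e (Suc n) + h3 *\<^sub>R e n
      + h4 *\<^sub>R S (y (Suc (Suc n))) (y (Suc (Suc n))) (y n) + h5 *\<^sub>R 0"
    using contraction[of "x (Suc (Suc n))" "x (Suc n)"] by (simp add: e_def y_def x)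
  also have "\<dots> \<le> h1 *\<^sub>R e n + h2 *\<^sub>R e (Suc n) + h3 *\<^sub>R e n
      + h4 *\<^sub>R (2 *\<^sub>R e (Suc n) + e n) + h5 *\<^sub>R 0"
  proof -
    have "S (y (Suc (Suc n))) (y (Suc (Suc n))) (y n) \<le> 2 *\<^sub>R e (Suc n) + e n"
      using S_triangle[of _ "y n" "y (Suc n)"] S_commute[of "y n" "y (Suc n)"] by (simp add: e_def)
    then show ?thesis
      using h_nonneg by (intro add_mono order_refl scaleR_left_mono)
  qed
  also have "\<dots> = (h2 + 2*h4) *\<^sub>R e (Suc n) + (h1 + h3 + h4) *\<^sub>R e n"
    by (simp add: algebra_simps)
  finally have "e (Suc n) \<le> (1 / (1 - (h2 + 2*h4))) *\<^sub>R ((h1 + h3 + h4) *\<^sub>R e n)"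
    using h_nonneg h_sum by (intro le_scaleR_absorb) auto
  then show ?thesis
    using S_commute[of "y n" "y (Suc n)"] S_commute[of "y (Suc n)" "y (Suc (Suc n))"]
    by (simp add: e_def y_def ratio_def)
qed

lemma coincidence_defect_le:
  assumes x: "\<And>n. k (x (Suc n)) = p (x n)"
    and conv: "\<And>n. S (p (x n)) (p (x n)) (k u) \<le> \<mu> n" and dec: "\<And>n. \<mu> (Suc n) \<le> \<mu> n"
  shows "S (p u) (p u) (k u) \<le> ((2*h1 + 6*h3 + 2*h4 + 2*h5 + 1) / (1 - (2*h2 + 4*h4))) *\<^sub>R \<mu> n"
proof -
  define y where "y n = p (x n)" for n
  define D where "D = S (p u) (p u) (k u)"
  have conv_Suc: "S (y (Suc n)) (y (Suc n)) (k u) \<le> \<mu> n"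
    using conv[of "Suc n"] dec[of n] unfolding y_def by (rule order_trans)
  have conv_rev: "S (k u) (k u) (y n) \<le> \<mu> n"
    using conv[of n] by (simp add: y_def S_commute[of "k u"])
  have consecutive: "S (y (Suc n)) (y (Suc n)) (y n) \<le> 3 *\<^sub>R \<mu> n"
  proof -
    have "S (y (Suc n)) (y (Suc n)) (y n) \<le> 2 *\<^sub>R S (y (Suc n)) (y (Suc n)) (k u) + S (k u) (k u) (y n)"
      by (rule S_triangle)
    also have "\<dots> \<le> 2 *\<^sub>R \<mu> n + 1 *\<^sub>R \<mu> n"
      using conv_Suc conv_rev by (intro add_mono scaleR_left_mono) simp_all
    finally show ?thesis
      by (simp only: scaleR_add_left[symmetric]) simp
  qed
  have to_limit: "S (p u) (p u) (y n) \<le> 2 *\<^sub>R D + \<mu> n"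
    using S_triangle[of "p u" "y n" "k u"] add_left_mono[OF conv_rev]
    unfolding D_def by (rule order_trans)
  have "S (p u) (p u) (y (Suc n)) \<le> h1 *\<^sub>R S (k u) (k u) (y n) + h2 *\<^sub>R D
      + h3 *\<^sub>R S (y (Suc n)) (y (Suc n)) (y n) + h4 *\<^sub>R S (p u) (p u) (y n)
      + h5 *\<^sub>R S (y (Suc n)) (y (Suc n)) (k u)"
    using contraction[of u "x (Suc n)"] by (simp add: x y_def D_def)
  also have "\<dots> \<le> h1 *\<^sub>R \<mu> n + h2 *\<^sub>R D + h3 *\<^sub>R (3 *\<^sub>R \<mu> n)
      + h4 *\<^sub>R (2 *\<^sub>R D + \<mu> n) + h5 *\<^sub>R \<mu> n"
    using h_nonneg conv_rev consecutive to_limit conv_Suc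
    by (intro add_mono scaleR_left_mono order_refl)
  also have "\<dots> = (h2 + 2*h4) *\<^sub>R D + (h1 + 3*h3 + h4 + h5) *\<^sub>R \<mu> n"
    by (simp add: algebra_simps)
  finally have near: "S (p u) (p u) (y (Suc n)) \<le> (h2 + 2*h4) *\<^sub>R D + (h1 + 3*h3 + h4 + h5) *\<^sub>R \<mu> n" .
  have "D \<le> 2 *\<^sub>R S (p u) (p u) (y (Suc n)) + S (y (Suc n)) (y (Suc n)) (k u)"
    unfolding D_def by (rule S_triangle)
  also have "\<dots> \<le> 2 *\<^sub>R ((h2 + 2*h4) *\<^sub>R D + (h1 + 3*h3 + h4 + h5) *\<^sub>R \<mu> n) + \<mu> n"
    using near conv_Suc by (intro add_mono scaleR_left_mono) simp_all
  also have "\<dots> = (2*h2 + 4*h4) *\<^sub>R D + (2*h1 + 6*h3 + 2*h4 + 2*h5 + 1) *\<^sub>R \<mu> n"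
    by (simp add: algebra_simps)
  finally have "D \<le> (1 / (1 - (2*h2 + 4*h4))) *\<^sub>R ((2*h1 + 6*h3 + 2*h4 + 2*h5 + 1) *\<^sub>R \<mu> n)"
    using h_sum h_nonneg by (intro le_scaleR_absorb) auto
  then show ?thesis
    by (simp add: D_def)
qed

lemma coincidence_at_limit:
  assumes x: "\<And>n. k (x (Suc n)) = p (x n)"
    and lim: "V_converges S (\<lambda>n. p (x n)) (k u)"
  shows "p u = k u"
proof -
  obtain \<mu> where \<mu>: "dec_to_zero \<mu>" and conv: "\<And>n. S (p (x n)) (p (x n)) (k u) \<le> \<mu> n"
    using lim unfolding V_converges_def by blast
  have "S (p u) (p u) (k u) \<le> 0"
  proof (rule le_zero_if_le_scaleR_dec_to_zero[OF \<mu>])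
    show "0 < (2*h1 + 6*h3 + 2*h4 + 2*h5 + 1) / (1 - (2*h2 + 4*h4))"
      using h_sum h_nonneg by simp
    show "S (p u) (p u) (k u) \<le> ((2*h1 + 6*h3 + 2*h4 + 2*h5 + 1) / (1 - (2*h2 + 4*h4))) *\<^sub>R \<mu> n" for n
      using \<mu> unfolding dec_to_zero_def
      by (intro coincidence_defect_le[where x = x and \<mu> = \<mu>, OF x conv]) blast
  qed
  then have "S (p u) (p u) (k u) = 0"
    using S_nonneg by (rule antisym)
  then show ?thesis
    by (simp add: S_eq_0_iff)
qed

lemma coincidence_point_exists:
  assumes arch: "archimedean_V TYPE('v)" and range: "range p \<subseteq> range k"
    and complete: "V_complete_on S (range p) \<or> V_complete_on S (range k)"
  obtains u where "p u = k u"
proof -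
  obtain x where x: "\<And>n. k (x (Suc n)) = p (x n)"
    using Jungck_sequence_exists[OF range] by blast
  define y where "y n = p (x n)" for n
  have Cauchy: "V_Cauchy S y"
    unfolding y_def using S_metric arch ratio_nonneg ratio_less_1 Jungck_step[where x = x, OF x]
    by (rule V_Cauchy_if_contracting)
  have in_range_p: "\<forall>n. y n \<in> range p"
    by (simp add: y_def)
  have in_range_k: "\<forall>n. y n \<in> range k"
    unfolding y_def x[symmetric] by simp
  have "\<exists>l\<in>range k. V_converges S y l"
  proof (cases "V_complete_on S (range p)")
    case True
    then have "\<exists>l\<in>range p. V_converges S y l"
      using in_range_p Cauchy unfolding V_complete_on_def by simp
    then show ?thesis
      using range by blast
  next
    case False
    then have "V_complete_on S (range k)"
      using complete by simp
    then show ?thesis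
      using in_range_k Cauchy unfolding V_complete_on_def by simp
  qed
  then obtain u where "V_converges S y (k u)"
    by blast
  then have "p u = k u"
    unfolding y_def by (rule coincidence_at_limit[where x = x, OF x])
  then show ?thesis
    by (rule that)
qed

end

theorem corollary3p2:
  fixes S :: "'a \<Rightarrow> 'a \<Rightarrow> 'a \<Rightarrow> 'v::{ordered_real_vector,lattice}"
    and p k :: "'a \<Rightarrow> 'a"
    and h1 h2 h3 h4 h5 :: real
  assumes arch: "archimedean_V TYPE('v)"
    and Smet: "vector_S_metric S"
    and complete: "V_complete_on S UNIV"
    and hpos: "h1 > 0" "h2 > 0" "h3 > 0" "h4 > 0" "h5 > 0"
    and hsum: "2*h1 + 2*h2 + 2*h3 + 4*h4 + 4*h5 < 1"
    and contr: "\<And>\<xi> \<gamma>. S (p \<xi>) (p \<xi>) (p \<gamma>) \<le>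
        h1 *\<^sub>R S (k \<xi>) (k \<xi>) (k \<gamma>) + h2 *\<^sub>R S (p \<xi>) (p \<xi>) (k \<xi>)
      + h3 *\<^sub>R S (p \<gamma>) (p \<gamma>) (k \<gamma>) + h4 *\<^sub>R S (p \<xi>) (p \<xi>) (k \<gamma>)
      + h5 *\<^sub>R S (p \<gamma>) (p \<gamma>) (k \<xi>)"
    and range_sub: "range p \<subseteq> range k"
    and sub_complete: "V_complete_on S (range p) \<or> V_complete_on S (range k)"
  shows "(\<exists>!y. point_of_coincidence p k y) \<and>
         (weakly_compatible p k \<longrightarrow> (\<exists>!x. p x = x \<and> k x = x))"
proof -
  interpret jungck_contraction S p k h1 h2 h3 h4 h5
    using Smet hpos hsum contr by unfold_locales auto
  obtain u where "p u = k u"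
    using coincidence_point_exists[OF arch range_sub sub_complete] .
  then have "point_of_coincidence p k (p u)"
    unfolding point_of_coincidence_def by (intro exI[of _ u]) simp
  then have "\<exists>!y. point_of_coincidence p k y"
    using point_of_coincidence_unique by (intro ex1I)
  then show ?thesis
    using weakly_compatible_unique_common_fixed_point by blast
qed

end
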